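(* Consider the ESBAS meta-algorithm $\sigma^{\textsc{esbas}}$ described in the context, run with a stochastic $K$-armed bandit $\Xi$ that guarantees a pseudo-regret of order $\mathcal{O}(\log(T)/\Delta^\dag_\beta)$. If $\Delta_\beta^\dag\in\Theta(1)$ (as $\beta\to\infty$), then $$\overline{\rho}_{ss}^{\sigma^{\textsc{esbas}}}(T)\in\mathcal{O}\left(\frac{\log^2(T)}{\Delta_\infty^\dag}\right),$$ where $\Delta_\infty^\dag=\mu_\infty^*-\mu_\infty^\dag>0$ is the limit of $\Delta^\dag_\beta$ as $\beta\to\infty$.
   Context: Setting. An agent interacts episodically with a fixed stochastic environment (actions in $\mathcal{A}$, observations in $\Omega$, rewards in $[R_{min},R_{max}]$). A trajectory is a finite sequence of (observation, action, reward) triples, with return $\mu(\varepsilon)=\sum_{t=1}^{|\varepsilon|}\gamma^{t-1}r(t)$ for a discount $0\le\gamma<1$. An RL algorithm maps a trajectory set $\mathcal{D}$ to a policy $\pi^\alpha_{\mathcal{D}}$; $\mathbb{E}\mu^\alpha_{\mathcal{D}}$ is the expected return of a trajectory generated by $\pi^\alpha_{\mathcal{D}}$. A portfolio is $\mathcal{P}=\{\alpha^k\}_{k=1}^K$. A meta-algorithm $\sigma$ selects at each meta-time $\tau=1,2,\dots$ an algorithm $\sigma(\tau)\in\mathcal{P}$; a trajectory is generated with the policy currently associated with $\sigma(\tau)$ and added to the shared trajectory set ($\mathcal{D}_0=\emptyset$, $\mathcal{D}_\tau=\mathcal{D}_{\tau-1}\cup\{\varepsilon_\tau\}$); $\mathcal{D}^\sigma_\tau$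 and $\mathbb{E}_\sigma$ denote the resulting random trajectory set and expectation. ESBAS: epoch $\beta=0,1,\dots$ consists of meta-times $2^\beta,\dots,2^{\beta+1}-1$. At the start of epoch $\beta$ each algorithm computes $\pi^\alpha_{\mathcal{D}_{2^\beta-1}}$, frozen for the epoch, and a fresh instance of $\Xi$ (arms = algorithms) is started; during the epoch $\Xi$ chooses which algorithm's frozen policy generates each trajectory, receiving its return as reward. Short-sighted pseudo-regret: $\overline{\rho}^\sigma_{ss}(T)=\mathbb{E}_\sigma\left[\sum_{\tau=1}^T\left(\max_{\alpha\in\mathcal{P}}\mathbb{E}\mu^\alpha_{\mathcal{D}^\sigma_{\tau-1}}-\mathbb{E}\mu^{\sigma(\tau)}_{\mathcal{D}^\sigma_{\tau-1}}\right)\right]$. Gaps: $\Delta^\alpha_\beta=\max_{\alpha'}\mathbb{E}\mu^{\alpha'}_{\mathcal{D}^{\sigma^{\textsc{esbas}}}_{2^\beta-1}}-\mathbb{E}\mu^{\alpha}_{\mathcal{D}^{\sigma^{\textsc{esbas}}}_{2^\beta-1}}$; $\Delta^\dag_\beta$ is the smallest non-null gap at epoch $\beta$. $\mu^*_\infty$ denotes the asymptotic performance of the best algorithm and $\mu^\dag_\infty$ that of the second best. *)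

theory Defs
  imports "HOL-Probability.Probability" "HOL-Library.Discrete_Functions" "HOL-Library.Landau_Symbols"
begin

type_synonym ('o, 'a) traj = "('o \<times> 'a \<times> real) list"

(* discounted return  mu(eps) = sum_{t=1}^{|eps|} gamma^(t-1) r(t)  (0-based index here) *)
definition ret :: "real \<Rightarrow> ('o, 'a) traj \<Rightarrow> real" where
  "ret \<gamma> \<epsilon> = (\<Sum>t<length \<epsilon>. \<gamma> ^ t * snd (snd (\<epsilon> ! t)))"

(* The fixed stochastic environment is given by the distribution env pol of the trajectory
   generated by policy pol.  E mu of a policy: *)
definition exp_ret :: "('p \<Rightarrow> ('o, 'a) traj pmf) \<Rightarrow> real \<Rightarrow> 'p \<Rightarrow> real" where
  "exp_ret env \<gamma> pol = measure_pmf.expectation (env pol) (ret \<gamma>)"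

(* A bandit algorithm maps its history of (arm, reward) pairs to a distribution over arms;
   nu a is the reward distribution of arm a. *)
primrec bandit_run ::
  "((nat \<times> real) list \<Rightarrow> nat pmf) \<Rightarrow> (nat \<Rightarrow> real pmf) \<Rightarrow> nat \<Rightarrow> (nat \<times> real) list pmf" where
  "bandit_run \<Xi> \<nu> 0 = return_pmf []"
| "bandit_run \<Xi> \<nu> (Suc n) =
     bind_pmf (bandit_run \<Xi> \<nu> n) (\<lambda>h. bind_pmf (\<Xi> h) (\<lambda>a. map_pmf (\<lambda>r. h @ [(a, r)]) (\<nu> a)))"

definition arm_mean :: "(nat \<Rightarrow> real pmf) \<Rightarrow> nat \<Rightarrow> real" where
  "arm_mean \<nu> a = measure_pmf.expectation (\<nu> a) (\<lambda>r. r)"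

definition arm_gap :: "nat \<Rightarrow> (nat \<Rightarrow> real pmf) \<Rightarrow> nat \<Rightarrow> real" where
  "arm_gap K \<nu> a = (MAX b\<in>{..<K}. arm_mean \<nu> b) - arm_mean \<nu> a"

definition arm_gap_dagger :: "nat \<Rightarrow> (nat \<Rightarrow> real pmf) \<Rightarrow> real" where
  "arm_gap_dagger K \<nu> = Min {arm_gap K \<nu> b | b. b < K \<and> arm_gap K \<nu> b \<noteq> 0}"

definition bandit_pseudo_regret ::
  "((nat \<times> real) list \<Rightarrow> nat pmf) \<Rightarrow> nat \<Rightarrow> (nat \<Rightarrow> real pmf) \<Rightarrow> nat \<Rightarrow> real" where
  "bandit_pseudo_regret \<Xi> K \<nu> T =
     measure_pmf.expectation (bandit_run \<Xi> \<nu> T) (\<lambda>h. \<Sum>(a, r)\<leftarrow>h. arm_gap K \<nu> a)"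

definition log_regret_bandit :: "nat \<Rightarrow> real \<Rightarrow> ((nat \<times> real) list \<Rightarrow> nat pmf) \<Rightarrow> bool" where
  "log_regret_bandit K B \<Xi> \<longleftrightarrow>
     (\<forall>h. set_pmf (\<Xi> h) \<subseteq> {..<K}) \<and>
     (\<exists>C. \<forall>\<nu>. (\<forall>a<K. set_pmf (\<nu> a) \<subseteq> {-B..B}) \<longrightarrow> (\<exists>a<K. arm_gap K \<nu> a \<noteq> 0) \<longrightarrow>
        (\<forall>T\<ge>2. bandit_pseudo_regret \<Xi> K \<nu> T \<le> C * ln (real T) / arm_gap_dagger K \<nu>))"

(* Meta-time tau >= 1 lies in epoch beta = floor_log tau; the policies of that epoch are
   trained on D_{2^beta - 1}, i.e. on the first  epoch_start tau  trajectories. *)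
definition epoch_start :: "nat \<Rightarrow> nat" where
  "epoch_start \<tau> = 2 ^ floor_log \<tau> - 1"

(* A portfolio of K algorithms: P k maps the trajectory set (chronological list) to a policy.
   The ESBAS history H records (selected algorithm, generated trajectory) per meta-time. *)
definition esbas_step ::
  "('p \<Rightarrow> ('o, 'a) traj pmf) \<Rightarrow> real \<Rightarrow> (nat \<Rightarrow> ('o, 'a) traj list \<Rightarrow> 'p)
   \<Rightarrow> ((nat \<times> real) list \<Rightarrow> nat pmf) \<Rightarrow> (nat \<times> ('o, 'a) traj) list
   \<Rightarrow> (nat \<times> ('o, 'a) traj) list pmf" where
  "esbas_step env \<gamma> P \<Xi> H =
     (let s = epoch_start (Suc (length H));
          D = map snd (take s H);
          hb = map (\<lambda>(a, e). (a, ret \<gamma> e)) (drop s H)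
      in bind_pmf (\<Xi> hb) (\<lambda>a. map_pmf (\<lambda>e. H @ [(a, e)]) (env (P a D))))"

primrec esbas_run ::
  "('p \<Rightarrow> ('o, 'a) traj pmf) \<Rightarrow> real \<Rightarrow> (nat \<Rightarrow> ('o, 'a) traj list \<Rightarrow> 'p)
   \<Rightarrow> ((nat \<times> real) list \<Rightarrow> nat pmf) \<Rightarrow> nat \<Rightarrow> (nat \<times> ('o, 'a) traj) list pmf" where
  "esbas_run env \<gamma> P \<Xi> 0 = return_pmf []"
| "esbas_run env \<gamma> P \<Xi> (Suc n) = bind_pmf (esbas_run env \<gamma> P \<Xi> n) (esbas_step env \<gamma> P \<Xi>)"

definition esbas_data where
  "esbas_data env \<gamma> P \<Xi> n = map_pmf (map snd) (esbas_run env \<gamma> P \<Xi> n)"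

definition alg_gap where
  "alg_gap env \<gamma> P K D \<alpha> = (MAX b\<in>{..<K}. exp_ret env \<gamma> (P b D)) - exp_ret env \<gamma> (P \<alpha> D)"

definition alg_gap_dagger where
  "alg_gap_dagger env \<gamma> P K D = Min {alg_gap env \<gamma> P K D b | b. b < K \<and> alg_gap env \<gamma> P K D b \<noteq> 0}"

(* short-sighted pseudo-regret of ESBAS; the policy associated with each algorithm at
   meta-time tau is the one frozen at the start of the current epoch. *)
definition esbas_ss_regret where
  "esbas_ss_regret env \<gamma> P \<Xi> K T =
     measure_pmf.expectation (esbas_run env \<gamma> P \<Xi> T)
       (\<lambda>H. \<Sum>\<tau>\<in>{1..T}. alg_gap env \<gamma> P K (map snd (take (epoch_start \<tau>) H)) (fst (H ! (\<tau> - 1))))"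

end

theory Submission
  imports Defs
begin

text \<open>During epoch \<open>\<beta>\<close> the policies are frozen, so ESBAS restricted to that epoch is a fresh
  run of the bandit \<open>\<Xi>\<close> whose arms are the returns of the policies trained on \<open>D_(2^\<beta>-1)\<close>; its
  arm gaps are the algorithm gaps.  The short-sighted regret of an epoch of length \<open>n \<le> 2^\<beta>\<close> is
  therefore the pseudo-regret of that bandit, \<open>O(log n / \<Delta>\<^sup>\<dagger>\<^sub>\<beta>) = O(\<beta>)\<close> because the gaps stay
  bounded away from zero.  Summing over the \<open>O(log T)\<close> epochs up to time \<open>T\<close> gives \<open>O(log\<^sup>2 T)\<close>;
  the limit gap \<open>\<Delta>\<^sup>\<dagger>\<^sub>\<infinity> > 0\<close> only enters as a constant factor.\<close>

lemma expectation_bind_pmf: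
  fixes f :: "'b \<Rightarrow> real"
  assumes "\<And>x. \<bar>f x\<bar> \<le> B"
  shows "measure_pmf.expectation (bind_pmf M N) f =
         measure_pmf.expectation M (\<lambda>x. measure_pmf.expectation (N x) f)"
  unfolding measure_pmf_bind
  by (rule integral_bind[where K="count_space UNIV" and B=B and B'=1])
     (auto simp: assms measure_pmf.emeasure_space_1 prob_space_imp_subprob_space
       measure_pmf.prob_space_axioms measure_pmf.finite_measure_axioms
       measure_pmf_in_subprob_algebra intro!: measurable_pmf_measure1)

lemma expectation_pmf_bounds:
  fixes f :: "'b \<Rightarrow> real"
  assumes "\<And>x. x \<in> set_pmf M \<Longrightarrow> a \<le> f x \<and> f x \<le> b"
  shows "a \<le> measure_pmf.expectation M f \<and> measure_pmf.expectation M f \<le> b"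
proof -
  have int: "integrable (measure_pmf M) f"
    by (rule measure_pmf.integrable_const_bound[where B="max \<bar>a\<bar> \<bar>b\<bar>"])
       (auto simp: AE_measure_pmf_iff dest!: assms)
  show ?thesis
    using measure_pmf.integral_le_const[OF int, of b] measure_pmf.integral_ge_const[OF int, of a]
    by (auto simp: AE_measure_pmf_iff assms)
qed

lemma abs_ret_le:
  assumes "0 \<le> \<gamma>" "\<gamma> < 1" "0 \<le> M" "\<And>o' a r. (o', a, r) \<in> set \<epsilon> \<Longrightarrow> \<bar>r\<bar> \<le> M"
  shows "\<bar>ret \<gamma> \<epsilon>\<bar> \<le> M / (1 - \<gamma>)"
proof -
  have "\<bar>ret \<gamma> \<epsilon>\<bar> \<le> (\<Sum>t<length \<epsilon>. \<bar>\<gamma> ^ t * snd (snd (\<epsilon> ! t))\<bar>)"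
    unfolding ret_def by (rule sum_abs)
  also have "\<dots> \<le> (\<Sum>t<length \<epsilon>. \<gamma> ^ t * M)"
  proof (rule sum_mono)
    fix t assume "t \<in> {..<length \<epsilon>}"
    then have "\<bar>snd (snd (\<epsilon> ! t))\<bar> \<le> M"
      using assms(4) nth_mem by (metis lessThan_iff prod.collapse)
    then show "\<bar>\<gamma> ^ t * snd (snd (\<epsilon> ! t))\<bar> \<le> \<gamma> ^ t * M"
      using assms(1) by (simp add: abs_mult mult_left_mono)
  qed
  also have "\<dots> = M * ((1 - \<gamma> ^ length \<epsilon>) / (1 - \<gamma>))"
    using assms(2) by (simp add: sum_distrib_right[symmetric] sum_gp_strict)
  also have "\<dots> \<le> M * (1 / (1 - \<gamma>))"
    using assms(1-3) by (intro mult_left_mono divide_right_mono) auto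
  finally show ?thesis by simp
qed

lemma abs_exp_ret_le:
  assumes "\<And>\<epsilon>. \<epsilon> \<in> set_pmf (env pol) \<Longrightarrow> \<bar>ret \<gamma> \<epsilon>\<bar> \<le> B"
  shows "\<bar>exp_ret env \<gamma> pol\<bar> \<le> B"
  using expectation_pmf_bounds[of "env pol" "-B" "ret \<gamma>" B] assms
  unfolding exp_ret_def by (force simp: abs_le_iff)

lemma alg_gap_nonneg: "\<alpha> < (K::nat) \<Longrightarrow> 0 \<le> alg_gap env \<gamma> P K D \<alpha>"
  unfolding alg_gap_def by (auto intro: Max_ge)

lemma abs_alg_gap_le:
  fixes K :: nat
  assumes "K \<ge> 1" "\<And>pol. \<bar>exp_ret env \<gamma> pol\<bar> \<le> B"
  shows "\<bar>alg_gap env \<gamma> P K D \<alpha>\<bar> \<le> 2 * B"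
proof -
  have "(MAX b\<in>{..<K}. exp_ret env \<gamma> (P b D)) \<in> (\<lambda>b. exp_ret env \<gamma> (P b D)) ` {..<K}"
    using assms(1) by (intro Max_in) (auto simp: lessThan_empty_iff)
  then obtain b where "(MAX b\<in>{..<K}. exp_ret env \<gamma> (P b D)) = exp_ret env \<gamma> (P b D)" by blast
  then show ?thesis
    using assms(2)[of "P b D"] assms(2)[of "P \<alpha> D"] unfolding alg_gap_def by (simp add: abs_le_iff)
qed

subsection \<open>Stochastic bandits\<close>

lemma set_bandit_run:
  assumes "\<And>h. set_pmf (\<Xi> h) \<subseteq> {..<K}" "h \<in> set_pmf (bandit_run \<Xi> \<nu> n)"
  shows "length h = n \<and> (\<forall>x\<in>set h. fst x < K)"
  using assms(2)
proof (induction n arbitrary: h)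
  case (Suc n)
  then show ?case using assms(1) by fastforce
qed simp

lemma bandit_pseudo_regret_bounds:
  assumes "\<And>h. set_pmf (\<Xi> h) \<subseteq> {..<K}" "\<And>a. a < K \<Longrightarrow> 0 \<le> arm_gap K \<nu> a \<and> arm_gap K \<nu> a \<le> G"
  shows "0 \<le> bandit_pseudo_regret \<Xi> K \<nu> n \<and> bandit_pseudo_regret \<Xi> K \<nu> n \<le> real n * G"
  unfolding bandit_pseudo_regret_def
proof (rule expectation_pmf_bounds)
  fix h assume "h \<in> set_pmf (bandit_run \<Xi> \<nu> n)"
  from set_bandit_run[OF assms(1) this] have h: "length h = n" "\<forall>x\<in>set h. fst x < K" by auto
  have "(\<lambda>(a, r). arm_gap K \<nu> a) = arm_gap K \<nu> \<circ> fst" by auto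
  moreover have "0 \<le> sum_list (map (arm_gap K \<nu> \<circ> fst) h) \<and>
                 sum_list (map (arm_gap K \<nu> \<circ> fst) h) \<le> real (length h) * G"
    using h(2) assms(2)
    by (induction h) (auto simp: algebra_simps, fastforce+)
  ultimately show "0 \<le> (\<Sum>(a, r)\<leftarrow>h. arm_gap K \<nu> a) \<and> (\<Sum>(a, r)\<leftarrow>h. arm_gap K \<nu> a) \<le> real n * G"
    using h(1) by metis
qed

text \<open>The summand \<open>G\<close> covers \<open>n = 1\<close> and problems without a non-null gap, where the bandit
  guarantee says nothing.\<close>

lemma log_regret_bandit_uniform_bound:
  assumes bandit: "log_regret_bandit K B \<Xi>" and "0 < c"
  obtains A where "0 \<le> A"
    "\<And>\<nu> n. (\<And>a. a < K \<Longrightarrow> set_pmf (\<nu> a) \<subseteq> {-B..B}) \<Longrightarrow>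
      (\<And>a. a < K \<Longrightarrow> 0 \<le> arm_gap K \<nu> a \<and> arm_gap K \<nu> a \<le> G) \<Longrightarrow>
      ((\<exists>a<K. arm_gap K \<nu> a \<noteq> 0) \<Longrightarrow> c \<le> arm_gap_dagger K \<nu>) \<Longrightarrow> 1 \<le> n \<Longrightarrow>
      bandit_pseudo_regret \<Xi> K \<nu> n \<le> A * ln (real n) + G"
proof -
  obtain C where supp: "\<And>h. set_pmf (\<Xi> h) \<subseteq> {..<K}" and
    C: "\<And>\<nu> T. (\<forall>a<K. set_pmf (\<nu> a) \<subseteq> {-B..B}) \<Longrightarrow> (\<exists>a<K. arm_gap K \<nu> a \<noteq> 0) \<Longrightarrow> 2 \<le> T \<Longrightarrow>
            bandit_pseudo_regret \<Xi> K \<nu> T \<le> C * ln (real T) / arm_gap_dagger K \<nu>"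
    using bandit unfolding log_regret_bandit_def by blast
  show thesis
  proof (rule that[of "max C 0 / c"])
    show "0 \<le> max C 0 / c" using \<open>0 < c\<close> by simp
    fix \<nu> and n :: nat
    assume rew: "\<And>a. a < K \<Longrightarrow> set_pmf (\<nu> a) \<subseteq> {-B..B}"
      and gaps: "\<And>a. a < K \<Longrightarrow> 0 \<le> arm_gap K \<nu> a \<and> arm_gap K \<nu> a \<le> G"
      and dagger: "(\<exists>a<K. arm_gap K \<nu> a \<noteq> 0) \<Longrightarrow> c \<le> arm_gap_dagger K \<nu>"
      and n: "1 \<le> n"
    have bounds: "0 \<le> bandit_pseudo_regret \<Xi> K \<nu> n \<and> bandit_pseudo_regret \<Xi> K \<nu> n \<le> real n * G"
      by (rule bandit_pseudo_regret_bounds[OF supp gaps])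
    have "0 < K" using supp[of "[]"] set_pmf_not_empty by fastforce
    then have G: "0 \<le> G" using gaps[of 0] by auto
    have lnA: "0 \<le> max C 0 / c * ln (real n)" using n \<open>0 < c\<close> by simp
    have "n = 1 \<or> 2 \<le> n" using n by linarith
    then consider "n = 1" | "\<forall>a<K. arm_gap K \<nu> a = 0" | "2 \<le> n" "\<exists>a<K. arm_gap K \<nu> a \<noteq> 0"
      by blast
    then show "bandit_pseudo_regret \<Xi> K \<nu> n \<le> max C 0 / c * ln (real n) + G"
    proof cases
      case 1
      then show ?thesis using bounds lnA by simp
    next
      case 2
      then have "bandit_pseudo_regret \<Xi> K \<nu> n \<le> real n * 0"
        by (intro bandit_pseudo_regret_bounds[OF supp, THEN conjunct2]) simp
      then show ?thesis using lnA G by simp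
    next
      case 3
      have c_le: "c \<le> arm_gap_dagger K \<nu>" using dagger 3(2) .
      have "bandit_pseudo_regret \<Xi> K \<nu> n \<le> C * ln (real n) / arm_gap_dagger K \<nu>"
        using C[OF _ 3(2,1)] rew by blast
      also have "\<dots> \<le> max C 0 * ln (real n) / arm_gap_dagger K \<nu>"
        using c_le \<open>0 < c\<close> n by (intro divide_right_mono mult_right_mono) auto
      also have "\<dots> \<le> max C 0 * ln (real n) / c"
        using c_le \<open>0 < c\<close> n by (intro divide_left_mono) auto
      finally show ?thesis using G by simp
    qed
  qed
qed

subsection \<open>Epochs\<close>

lemma epoch_start_eq:
  assumes "2 ^ \<beta> \<le> \<tau>" "\<tau> < 2 * 2 ^ \<beta>"
  shows "epoch_start \<tau> = 2 ^ \<beta> - 1"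
proof -
  have "floor_log \<tau> = \<beta>" using assms by (intro floor_log_eqI) auto
  then show ?thesis by (simp add: epoch_start_def)
qed

lemma epoch_meta_times:
  assumes "\<beta> \<le> floor_log T" "1 \<le> T"
  defines "n \<equiv> min (2 ^ \<beta>) (T + 1 - 2 ^ \<beta>)"
  shows "{\<tau> \<in> {1..T}. floor_log \<tau> = \<beta>} = {2 ^ \<beta> - 1 + 1..2 ^ \<beta> - 1 + n}"
    and "1 \<le> n" "n \<le> 2 ^ \<beta>" "2 ^ \<beta> - 1 + n \<le> T"
proof -
  have "(2::nat) ^ \<beta> \<le> 2 ^ floor_log T" using assms(1) by (intro power_increasing) auto
  also have "\<dots> \<le> T" using assms(2) by (intro floor_log_exp2_le) auto
  finally have bT: "(2::nat) ^ \<beta> \<le> T" .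
  have p: "(1::nat) \<le> 2 ^ \<beta>" by simp
  have "x \<in> {\<tau> \<in> {1..T}. floor_log \<tau> = \<beta>} \<longleftrightarrow> 1 \<le> x \<and> x \<le> T \<and> 2 ^ \<beta> \<le> x \<and> x < 2 * 2 ^ \<beta>" for x
    using floor_log_eqI[of x \<beta>] floor_log_exp2_le[of x] floor_log_exp2_gt[of x] by auto
  moreover have "(1 \<le> x \<and> x \<le> T \<and> p \<le> x \<and> x < 2 * p) \<longleftrightarrow> (p - 1 + 1 \<le> x \<and> x \<le> p - 1 + min p (T + 1 - p))"
    if "1 \<le> p" "p \<le> T" for p x :: nat
    using that by auto
  ultimately show "{\<tau> \<in> {1..T}. floor_log \<tau> = \<beta>} = {2 ^ \<beta> - 1 + 1..2 ^ \<beta> - 1 + n}"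
    using p bT unfolding n_def by (auto simp: set_eq_iff)
  show "1 \<le> n" "n \<le> 2 ^ \<beta>" "2 ^ \<beta> - 1 + n \<le> T" using bT p by (auto simp: n_def)
qed

lemma real_floor_log_mult_ln2_le:
  assumes "1 \<le> T"
  shows "real (floor_log T) * ln 2 \<le> ln (real T)"
proof -
  have "(2::nat) ^ floor_log T \<le> T" using assms by (intro floor_log_exp2_le) auto
  then have "(2::real) ^ floor_log T \<le> real T" by (metis of_nat_le_iff of_nat_numeral of_nat_power)
  then have "ln ((2::real) ^ floor_log T) \<le> ln (real T)" by (intro ln_mono) auto
  then show ?thesis by (simp add: ln_realpow)
qed

lemma sum_epochs_le_ln_squared:
  fixes A G :: real
  assumes "0 \<le> A" "0 \<le> G" "2 \<le> T"
  shows "(\<Sum>\<beta>\<le>floor_log T. A * real \<beta> + G) \<le> 2 * (A + G) / (ln 2)\<^sup>2 * (ln (real T))\<^sup>2"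
proof -
  define L where "L = floor_log T"
  have L1: "1 \<le> L" unfolding L_def using floor_log_rec[OF assms(3)] by simp
  have "real L * ln 2 \<le> ln (real T)"
    unfolding L_def using assms(3) by (intro real_floor_log_mult_ln2_le) auto
  then have "real L \<le> ln (real T) / ln 2" by (simp add: le_divide_eq)
  then have L_ln: "(real L)\<^sup>2 \<le> (ln (real T) / ln 2)\<^sup>2" by (intro power_mono) auto
  have card: "real (card {..L}) \<le> 2 * real L" using L1 by simp
  have "A * real L + G \<le> (A + G) * real L"
    using mult_left_mono[of 1 "real L" G] L1 assms(2) by (simp add: distrib_right)
  have "(\<Sum>\<beta>\<le>L. A * real \<beta> + G) \<le> real (card {..L}) * (A * real L + G)"
    by (rule sum_bounded_above) (use assms(1) in \<open>auto intro: mult_left_mono\<close>)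
  also have "\<dots> \<le> (2 * real L) * ((A + G) * real L)"
    by (rule mult_mono[OF card \<open>A * real L + G \<le> (A + G) * real L\<close>]) (use assms in auto)
  also have "\<dots> = 2 * (A + G) * (real L)\<^sup>2" by (simp add: power2_eq_square)
  also have "\<dots> \<le> 2 * (A + G) * (ln (real T) / ln 2)\<^sup>2"
    using L_ln assms(1,2) by (intro mult_left_mono) auto
  finally show ?thesis unfolding L_def by (simp add: power_divide)
qed

subsection \<open>ESBAS as a sequence of bandit runs\<close>

definition epoch_bandit ::
  "('p \<Rightarrow> ('o, 'a) traj pmf) \<Rightarrow> real \<Rightarrow> (nat \<Rightarrow> ('o, 'a) traj list \<Rightarrow> 'p) \<Rightarrow> ('o, 'a) traj list
   \<Rightarrow> nat \<Rightarrow> real pmf" where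
  "epoch_bandit env \<gamma> P D = (\<lambda>a. map_pmf (ret \<gamma>) (env (P a D)))"

lemma arm_gap_epoch_bandit: "arm_gap K (epoch_bandit env \<gamma> P D) = alg_gap env \<gamma> P K D"
  by (auto simp: epoch_bandit_def arm_gap_def alg_gap_def arm_mean_def exp_ret_def)

lemma arm_gap_dagger_epoch_bandit:
  "arm_gap_dagger K (epoch_bandit env \<gamma> P D) = alg_gap_dagger env \<gamma> P K D"
  unfolding arm_gap_dagger_def alg_gap_dagger_def arm_gap_epoch_bandit ..

context
  fixes env :: "'p \<Rightarrow> ('o, 'a) traj pmf" and \<gamma> :: real
    and P :: "nat \<Rightarrow> ('o, 'a) traj list \<Rightarrow> 'p" and \<Xi> :: "(nat \<times> real) list \<Rightarrow> nat pmf"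
begin

primrec esbas_iter :: "nat \<Rightarrow> (nat \<times> ('o, 'a) traj) list \<Rightarrow> (nat \<times> ('o, 'a) traj) list pmf" where
  "esbas_iter 0 H = return_pmf H"
| "esbas_iter (Suc n) H = bind_pmf (esbas_iter n H) (esbas_step env \<gamma> P \<Xi>)"

lemma esbas_run_eq_iter: "esbas_run env \<gamma> P \<Xi> n = esbas_iter n []"
  by (induction n) auto

lemma esbas_iter_add: "esbas_iter (a + b) H = bind_pmf (esbas_iter a H) (esbas_iter b)"
  by (induction b) (auto simp: bind_return_pmf' bind_assoc_pmf)

lemma set_esbas_iter:
  "H' \<in> set_pmf (esbas_iter n H) \<Longrightarrow> \<exists>X. H' = H @ X \<and> length X = n"
proof (induction n arbitrary: H')
  case (Suc n)
  then obtain H1 where H1: "H1 \<in> set_pmf (esbas_iter n H)" "H' \<in> set_pmf (esbas_step env \<gamma> P \<Xi> H1)"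
    by auto
  from Suc.IH[OF H1(1)] obtain X where "H1 = H @ X" "length X = n" by auto
  moreover obtain x where "H' = H1 @ [x]" using H1(2) by (auto simp: esbas_step_def Let_def)
  ultimately show ?case by (intro exI[of _ "X @ [x]"]) auto
qed simp

lemma length_esbas_run: "H \<in> set_pmf (esbas_run env \<gamma> P \<Xi> n) \<Longrightarrow> length H = n"
  using set_esbas_iter[of H n "[]"] by (auto simp: esbas_run_eq_iter)

text \<open>Inside an epoch the trained policies are frozen, so every ESBAS step is a bandit step.\<close>

lemma esbas_iter_epoch_eq_bandit_run:
  assumes len: "length H0 = 2 ^ \<beta> - 1" and n: "n \<le> 2 ^ \<beta>"
  shows "map_pmf (\<lambda>H. map (\<lambda>(a, e). (a, ret \<gamma> e)) (drop (2 ^ \<beta> - 1) H)) (esbas_iter n H0)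
       = bandit_run \<Xi> (epoch_bandit env \<gamma> P (map snd H0)) n"
  using n
proof (induction n)
  case 0
  then show ?case using len by simp
next
  case (Suc n)
  define s where "s = (2::nat) ^ \<beta> - 1"
  define \<Phi> where "\<Phi> = (\<lambda>H :: (nat \<times> ('o, 'a) traj) list. map (\<lambda>(a, e). (a, ret \<gamma> e)) (drop s H))"
  define \<nu> where "\<nu> = epoch_bandit env \<gamma> P (map snd H0)"
  define G where "G = (\<lambda>h. bind_pmf (\<Xi> h) (\<lambda>a. map_pmf (\<lambda>r. h @ [(a, r)]) (\<nu> a)))"
  have step: "map_pmf \<Phi> (esbas_step env \<gamma> P \<Xi> H) = G (\<Phi> H)"
    if H: "H \<in> set_pmf (esbas_iter n H0)" for H
  proof -
    obtain X where X: "H = H0 @ X" "length X = n" using set_esbas_iter[OF H] by auto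
    have "epoch_start (Suc (length H)) = s"
      unfolding s_def using X len Suc.prems by (intro epoch_start_eq) auto
    moreover have "take s H = H0" "drop s H = X" "s - length H = 0"
      using X len by (auto simp: s_def)
    ultimately show ?thesis
      unfolding esbas_step_def Let_def G_def map_bind_pmf
      by (intro bind_pmf_cong) (auto simp: \<Phi>_def pmf.map_comp \<nu>_def epoch_bandit_def o_def)
  qed
  have "map_pmf \<Phi> (esbas_iter (Suc n) H0) = bind_pmf (esbas_iter n H0) (\<lambda>H. G (\<Phi> H))"
    by (simp add: map_bind_pmf step cong: bind_pmf_cong)
  also have "\<dots> = bind_pmf (map_pmf \<Phi> (esbas_iter n H0)) G"
    by (simp add: bind_map_pmf)
  also have "\<dots> = bandit_run \<Xi> \<nu> (Suc n)"
    using Suc by (simp add: \<Phi>_def \<nu>_def s_def G_def)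
  finally show ?case by (simp add: \<Phi>_def \<nu>_def s_def)
qed

definition ss_gap :: "nat \<Rightarrow> nat \<Rightarrow> (nat \<times> ('o, 'a) traj) list \<Rightarrow> real" where
  "ss_gap K \<tau> H = alg_gap env \<gamma> P K (map snd (take (epoch_start \<tau>) H)) (fst (H ! (\<tau> - 1)))"

lemma abs_sum_ss_gap_le:
  assumes "\<And>D \<alpha>. \<bar>alg_gap env \<gamma> P K D \<alpha>\<bar> \<le> G" "finite S"
  shows "\<bar>\<Sum>\<tau>\<in>S. ss_gap K \<tau> H\<bar> \<le> real (card S) * G"
proof -
  have "\<bar>\<Sum>\<tau>\<in>S. ss_gap K \<tau> H\<bar> \<le> (\<Sum>\<tau>\<in>S. \<bar>ss_gap K \<tau> H\<bar>)" by (rule sum_abs)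
  also have "\<dots> \<le> real (card S) * G" by (rule sum_bounded_above) (simp add: ss_gap_def assms)
  finally show ?thesis .
qed

lemma map_pmf_take_esbas_iter:
  "map_pmf (take (length H + n)) (esbas_iter (n + k) H) = esbas_iter n H"
proof -
  have "map_pmf (take (length H + n)) (esbas_iter k H') = return_pmf H'"
    if "H' \<in> set_pmf (esbas_iter n H)" for H'
  proof -
    have "length H' = length H + n" using set_esbas_iter[OF that] by auto
    then have "take (length H + n) H'' = H'" if "H'' \<in> set_pmf (esbas_iter k H')" for H''
      using set_esbas_iter[OF that] by auto
    then show ?thesis by (simp add: map_pmf_eq_return_pmf_iff)
  qed
  then show ?thesis
    by (simp add: esbas_iter_add map_bind_pmf bind_return_pmf' cong: bind_pmf_cong)
qed

lemma expectation_epoch_ss_gap: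
  assumes len: "length H0 = 2 ^ \<beta> - 1" and n: "n \<le> 2 ^ \<beta>" and m: "n \<le> m"
  shows "measure_pmf.expectation (esbas_iter m H0) (\<lambda>H. \<Sum>\<tau>\<in>{2 ^ \<beta> - 1 + 1..2 ^ \<beta> - 1 + n}. ss_gap K \<tau> H)
       = bandit_pseudo_regret \<Xi> K (epoch_bandit env \<gamma> P (map snd H0)) n"
proof -
  define s where "s = (2::nat) ^ \<beta> - 1"
  define \<Phi> where "\<Phi> = (\<lambda>H :: (nat \<times> ('o, 'a) traj) list. map (\<lambda>(a, e). (a, ret \<gamma> e)) (drop s H))"
  define g where "g = (\<lambda>h :: (nat \<times> real) list. \<Sum>(a, r)\<leftarrow>h. alg_gap env \<gamma> P K (map snd H0) a)"
  have len_s: "length H0 = s" using len by (simp add: s_def)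
  have epoch: "epoch_start (Suc (s + i)) = s" if "i < n" for i
    using that n unfolding s_def by (intro epoch_start_eq) auto
  have S_eq: "(\<Sum>\<tau>\<in>{s + 1..s + n}. ss_gap K \<tau> (H0 @ X)) = g (\<Phi> (take (s + n) (H0 @ X)))"
    if "n \<le> length X" for X
  proof -
    have "(\<Sum>i<n. alg_gap env \<gamma> P K (map snd H0) (fst (take n X ! i))) =
          (\<Sum>\<tau>\<in>{s + 1..s + n}. ss_gap K \<tau> (H0 @ X))"
      by (rule sum.reindex_bij_witness[where i="\<lambda>\<tau>. \<tau> - (s + 1)" and j="\<lambda>i. s + 1 + i"])
         (auto simp: ss_gap_def epoch nth_append len_s)
    then have "(\<Sum>\<tau>\<in>{s + 1..s + n}. ss_gap K \<tau> (H0 @ X)) =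
          (\<Sum>i<n. alg_gap env \<gamma> P K (map snd H0) (fst (take n X ! i)))" ..
    also have "\<dots> = g (\<Phi> (take (s + n) (H0 @ X)))"
      using len_s that by (simp add: g_def \<Phi>_def sum_list_sum_nth atLeast0LessThan case_prod_beta)
    finally show ?thesis .
  qed
  have "AE H in measure_pmf (esbas_iter m H0).
          (\<Sum>\<tau>\<in>{s + 1..s + n}. ss_gap K \<tau> H) = g (\<Phi> (take (s + n) H))"
    unfolding AE_measure_pmf_iff using S_eq m by (metis set_esbas_iter)
  then have "measure_pmf.expectation (esbas_iter m H0) (\<lambda>H. \<Sum>\<tau>\<in>{s + 1..s + n}. ss_gap K \<tau> H)
      = measure_pmf.expectation (esbas_iter m H0) (\<lambda>H. g (\<Phi> (take (s + n) H)))"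
    by (intro integral_cong_AE) auto
  also have "\<dots> = measure_pmf.expectation (map_pmf (take (length H0 + n)) (esbas_iter (n + (m - n)) H0)) (g \<circ> \<Phi>)"
    using len_s m by simp
  also have "\<dots> = measure_pmf.expectation (map_pmf \<Phi> (esbas_iter n H0)) g"
    unfolding map_pmf_take_esbas_iter by (simp add: o_def)
  also have "\<dots> = bandit_pseudo_regret \<Xi> K (epoch_bandit env \<gamma> P (map snd H0)) n"
    unfolding \<Phi>_def s_def esbas_iter_epoch_eq_bandit_run[OF len n]
    by (simp add: bandit_pseudo_regret_def g_def arm_gap_epoch_bandit)
  finally show ?thesis by (simp add: s_def)
qed

lemma esbas_ss_regret_eq_sum_ss_gap:
  "esbas_ss_regret env \<gamma> P \<Xi> K T =
     measure_pmf.expectation (esbas_run env \<gamma> P \<Xi> T) (\<lambda>H. \<Sum>\<tau>\<in>{1..T}. ss_gap K \<tau> H)"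
  unfolding esbas_ss_regret_def ss_gap_def ..

lemma esbas_ss_regret_le_sum_epochs:
  assumes supp: "\<And>h. set_pmf (\<Xi> h) \<subseteq> {..<K}"
    and bdd: "\<And>D \<alpha>. \<bar>alg_gap env \<gamma> P K D \<alpha>\<bar> \<le> G"
    and epoch: "\<And>\<beta> n H0. 1 \<le> n \<Longrightarrow> n \<le> 2 ^ \<beta> \<Longrightarrow> H0 \<in> set_pmf (esbas_run env \<gamma> P \<Xi> (2 ^ \<beta> - 1)) \<Longrightarrow>
      bandit_pseudo_regret \<Xi> K (epoch_bandit env \<gamma> P (map snd H0)) n \<le> Bd \<beta>"
    and T: "1 \<le> T"
  shows "0 \<le> esbas_ss_regret env \<gamma> P \<Xi> K T \<and> esbas_ss_regret env \<gamma> P \<Xi> K T \<le> (\<Sum>\<beta>\<le>floor_log T. Bd \<beta>)"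
proof -
  define S where "S = (\<lambda>\<beta> H. \<Sum>\<tau>\<in>{\<tau> \<in> {1..T}. floor_log \<tau> = \<beta>}. ss_gap K \<tau> H)"
  have "0 \<le> G" using bdd by (meson abs_ge_zero order_trans)
  have S_bdd: "\<bar>S \<beta> H\<bar> \<le> real T * G" for \<beta> H
  proof -
    have "card {\<tau> \<in> {1..T}. floor_log \<tau> = \<beta>} \<le> card {1..T}" by (intro card_mono) auto
    then have "real (card {\<tau> \<in> {1..T}. floor_log \<tau> = \<beta>}) * G \<le> real T * G"
      using \<open>0 \<le> G\<close> by (intro mult_right_mono) auto
    then show ?thesis
      using abs_sum_ss_gap_le[OF bdd, of "{\<tau> \<in> {1..T}. floor_log \<tau> = \<beta>}" H] unfolding S_def by simp
  qed
  have "esbas_ss_regret env \<gamma> P \<Xi> K T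
      = measure_pmf.expectation (esbas_run env \<gamma> P \<Xi> T) (\<lambda>H. \<Sum>\<beta>\<le>floor_log T. S \<beta> H)"
    unfolding esbas_ss_regret_eq_sum_ss_gap S_def
    by (subst sum.group[where g=floor_log]) (auto intro: floor_log_le_iff)
  also have "\<dots> = (\<Sum>\<beta>\<le>floor_log T. measure_pmf.expectation (esbas_run env \<gamma> P \<Xi> T) (S \<beta>))"
    by (intro Bochner_Integration.integral_sum measure_pmf.integrable_const_bound[where B="real T * G"])
       (auto simp: S_bdd)
  finally have regret_eq: "esbas_ss_regret env \<gamma> P \<Xi> K T =
      (\<Sum>\<beta>\<le>floor_log T. measure_pmf.expectation (esbas_run env \<gamma> P \<Xi> T) (S \<beta>))" .
  have "0 \<le> measure_pmf.expectation (esbas_run env \<gamma> P \<Xi> T) (S \<beta>) \<and>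
        measure_pmf.expectation (esbas_run env \<gamma> P \<Xi> T) (S \<beta>) \<le> Bd \<beta>"
    if \<beta>: "\<beta> \<le> floor_log T" for \<beta>
  proof -
    define s where "s = (2::nat) ^ \<beta> - 1"
    define n where "n = min ((2::nat) ^ \<beta>) (T + 1 - 2 ^ \<beta>)"
    have ivl: "{\<tau> \<in> {1..T}. floor_log \<tau> = \<beta>} = {2 ^ \<beta> - 1 + 1..2 ^ \<beta> - 1 + n}"
      and n: "1 \<le> n" "n \<le> 2 ^ \<beta>" "s + n \<le> T"
      using epoch_meta_times[OF \<beta> T] by (simp_all add: n_def s_def)
    have run: "esbas_run env \<gamma> P \<Xi> T = bind_pmf (esbas_run env \<gamma> P \<Xi> s) (esbas_iter (T - s))"
      using esbas_iter_add[of s "T - s" "[]"] n(3) by (simp add: esbas_run_eq_iter)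
    have "measure_pmf.expectation (esbas_run env \<gamma> P \<Xi> T) (S \<beta>)
        = measure_pmf.expectation (esbas_run env \<gamma> P \<Xi> s)
            (\<lambda>H0. measure_pmf.expectation (esbas_iter (T - s) H0) (S \<beta>))"
      unfolding run by (rule expectation_bind_pmf[OF S_bdd])
    also have "\<dots> = measure_pmf.expectation (esbas_run env \<gamma> P \<Xi> s)
            (\<lambda>H0. bandit_pseudo_regret \<Xi> K (epoch_bandit env \<gamma> P (map snd H0)) n)"
    proof (intro integral_cong_AE AE_pmfI)
      fix H0 assume "H0 \<in> set_pmf (esbas_run env \<gamma> P \<Xi> s)"
      then have "length H0 = 2 ^ \<beta> - 1" by (simp add: length_esbas_run s_def)
      then show "measure_pmf.expectation (esbas_iter (T - s) H0) (S \<beta>) =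
                 bandit_pseudo_regret \<Xi> K (epoch_bandit env \<gamma> P (map snd H0)) n"
        unfolding S_def ivl by (rule expectation_epoch_ss_gap) (use n in \<open>auto simp: s_def\<close>)
    qed auto
    finally have regret_epoch: "measure_pmf.expectation (esbas_run env \<gamma> P \<Xi> T) (S \<beta>) = \<dots>" .
    have "0 \<le> bandit_pseudo_regret \<Xi> K (epoch_bandit env \<gamma> P D) n" for D
      using bandit_pseudo_regret_bounds[OF supp, where \<nu>="epoch_bandit env \<gamma> P D" and G=G and n=n] bdd
      by (auto simp: arm_gap_epoch_bandit alg_gap_nonneg abs_le_iff)
    then show ?thesis
      unfolding regret_epoch using epoch[OF n(1,2)]
      by (intro expectation_pmf_bounds) (simp add: s_def)
  qed
  then show ?thesis
    unfolding regret_eq by (auto intro: sum_nonneg sum_mono)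
qed

lemma epoch_bandit_pseudo_regret_le:
  fixes K :: nat
  assumes bandit: "log_regret_bandit K B \<Xi>" and "0 < c" and "1 \<le> K"
    and ret_B: "\<And>pol \<epsilon>. \<epsilon> \<in> set_pmf (env pol) \<Longrightarrow> \<bar>ret \<gamma> \<epsilon>\<bar> \<le> B"
    and gap_lower: "\<And>\<beta>. AE D in measure_pmf (esbas_data env \<gamma> P \<Xi> (2 ^ \<beta> - 1)).
                     (\<exists>\<alpha><K. alg_gap env \<gamma> P K D \<alpha> \<noteq> 0) \<longrightarrow> c \<le> alg_gap_dagger env \<gamma> P K D"
  obtains A where "0 \<le> A"
    "\<And>\<beta> n H0. 1 \<le> n \<Longrightarrow> n \<le> 2 ^ \<beta> \<Longrightarrow> H0 \<in> set_pmf (esbas_run env \<gamma> P \<Xi> (2 ^ \<beta> - 1)) \<Longrightarrow>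
      bandit_pseudo_regret \<Xi> K (epoch_bandit env \<gamma> P (map snd H0)) n \<le> A * real \<beta> + 2 * B"
proof -
  have gap_B: "\<bar>alg_gap env \<gamma> P K D \<alpha>\<bar> \<le> 2 * B" for D \<alpha>
    by (intro abs_alg_gap_le[OF \<open>1 \<le> K\<close>] abs_exp_ret_le ret_B)
  obtain A where "0 \<le> A" and A:
    "\<And>\<nu> n. (\<And>a. a < K \<Longrightarrow> set_pmf (\<nu> a) \<subseteq> {-B..B}) \<Longrightarrow>
      (\<And>a. a < K \<Longrightarrow> 0 \<le> arm_gap K \<nu> a \<and> arm_gap K \<nu> a \<le> 2 * B) \<Longrightarrow>
      ((\<exists>a<K. arm_gap K \<nu> a \<noteq> 0) \<Longrightarrow> c \<le> arm_gap_dagger K \<nu>) \<Longrightarrow> 1 \<le> n \<Longrightarrow>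
      bandit_pseudo_regret \<Xi> K \<nu> n \<le> A * ln (real n) + 2 * B"
    using log_regret_bandit_uniform_bound[OF bandit \<open>0 < c\<close>, where G="2 * B"] by blast
  show thesis
  proof (rule that[of "A * ln 2"])
    show "0 \<le> A * ln 2" using \<open>0 \<le> A\<close> by simp
    fix \<beta> and n :: nat and H0
    assume n: "1 \<le> n" "n \<le> 2 ^ \<beta>" and H0: "H0 \<in> set_pmf (esbas_run env \<gamma> P \<Xi> (2 ^ \<beta> - 1))"
    have regret: "bandit_pseudo_regret \<Xi> K (epoch_bandit env \<gamma> P (map snd H0)) n \<le> A * ln (real n) + 2 * B"
    proof (rule A)
      show "(\<exists>a<K. arm_gap K (epoch_bandit env \<gamma> P (map snd H0)) a \<noteq> 0) \<Longrightarrow>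
            c \<le> arm_gap_dagger K (epoch_bandit env \<gamma> P (map snd H0))"
        using gap_lower[of \<beta>] H0
        by (auto simp: AE_measure_pmf_iff esbas_data_def arm_gap_epoch_bandit arm_gap_dagger_epoch_bandit)
      show "set_pmf (epoch_bandit env \<gamma> P (map snd H0) a) \<subseteq> {-B..B}" for a
        using ret_B by (force simp: epoch_bandit_def abs_le_iff)
      show "0 \<le> arm_gap K (epoch_bandit env \<gamma> P (map snd H0)) a \<and>
            arm_gap K (epoch_bandit env \<gamma> P (map snd H0)) a \<le> 2 * B" if "a < K" for a
        using alg_gap_nonneg[OF that] gap_B by (simp add: arm_gap_epoch_bandit abs_le_iff)
    qed (rule n(1))
    have "real n \<le> 2 ^ \<beta>" using n(2) by (metis of_nat_le_iff of_nat_numeral of_nat_power)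
    then have "ln (real n) \<le> ln (2 ^ \<beta>)" using n(1) by (intro ln_mono) auto
    then have "ln (real n) \<le> real \<beta> * ln 2" by (simp add: ln_realpow)
    from mult_left_mono[OF this \<open>0 \<le> A\<close>] have "A * ln (real n) \<le> A * ln 2 * real \<beta>"
      by (simp add: ac_simps)
    then show "bandit_pseudo_regret \<Xi> K (epoch_bandit env \<gamma> P (map snd H0)) n \<le> A * ln 2 * real \<beta> + 2 * B"
      using regret by linarith
  qed
qed

end

theorem corollary1:
  fixes env :: "'p \<Rightarrow> ('o, 'a) traj pmf"
    and \<gamma> Rmin Rmax c c' \<Delta>inf :: real
    and K :: nat
    and P :: "nat \<Rightarrow> ('o, 'a) traj list \<Rightarrow> 'p"
    and \<Xi> :: "(nat \<times> real) list \<Rightarrow> nat pmf"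
  assumes gamma: "0 \<le> \<gamma>" "\<gamma> < 1"
    and rewards: "\<And>pol \<epsilon> o' a r. \<epsilon> \<in> set_pmf (env pol) \<Longrightarrow> (o', a, r) \<in> set \<epsilon> \<Longrightarrow>
                    Rmin \<le> r \<and> r \<le> Rmax"
    and K: "K \<ge> 1"
    and bandit: "log_regret_bandit K (max \<bar>Rmin\<bar> \<bar>Rmax\<bar> / (1 - \<gamma>)) \<Xi>"
    and Theta1: "0 < c" "\<And>\<beta>. AE D in measure_pmf (esbas_data env \<gamma> P \<Xi> (2 ^ \<beta> - 1)).
                   (\<exists>\<alpha><K. alg_gap env \<gamma> P K D \<alpha> \<noteq> 0) \<longrightarrow>
                   c \<le> alg_gap_dagger env \<gamma> P K D \<and> alg_gap_dagger env \<gamma> P K D \<le> c'"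
    and lim_pos: "\<Delta>inf > 0"
    and lim: "\<And>\<epsilon>. \<epsilon> > 0 \<Longrightarrow>
               (\<lambda>\<beta>. measure_pmf.prob (esbas_data env \<gamma> P \<Xi> (2 ^ \<beta> - 1))
                   {D. \<not> ((\<exists>\<alpha><K. alg_gap env \<gamma> P K D \<alpha> \<noteq> 0) \<and>
                           \<bar>alg_gap_dagger env \<gamma> P K D - \<Delta>inf\<bar> < \<epsilon>)}) \<longlonglongrightarrow> 0"
  shows "(\<lambda>T. esbas_ss_regret env \<gamma> P \<Xi> K T) \<in> O(\<lambda>T. (ln (real T))\<^sup>2 / \<Delta>inf)"
proof -
  define B where "B = max \<bar>Rmin\<bar> \<bar>Rmax\<bar> / (1 - \<gamma>)"
  have ret_B: "\<bar>ret \<gamma> \<epsilon>\<bar> \<le> B" if "\<epsilon> \<in> set_pmf (env pol)" for \<epsilon> pol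
    unfolding B_def
  proof (rule abs_ret_le[OF gamma])
    fix o' a r assume "(o', a, r) \<in> set \<epsilon>"
    then have "Rmin \<le> r" "r \<le> Rmax" using rewards[OF that] by auto
    then show "\<bar>r\<bar> \<le> max \<bar>Rmin\<bar> \<bar>Rmax\<bar>" by linarith
  qed simp
  have gap_B: "\<bar>alg_gap env \<gamma> P K D \<alpha>\<bar> \<le> 2 * B" for D \<alpha>
    by (intro abs_alg_gap_le[OF K] abs_exp_ret_le ret_B)
  have "0 \<le> B" unfolding B_def using gamma by simp
  have supp: "\<And>h. set_pmf (\<Xi> h) \<subseteq> {..<K}" using bandit by (simp add: log_regret_bandit_def)
  have gap_lower: "AE D in measure_pmf (esbas_data env \<gamma> P \<Xi> (2 ^ \<beta> - 1)).
      (\<exists>\<alpha><K. alg_gap env \<gamma> P K D \<alpha> \<noteq> 0) \<longrightarrow> c \<le> alg_gap_dagger env \<gamma> P K D" for \<beta>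
    using Theta1(2) by (rule eventually_mono) auto
  obtain A where "0 \<le> A" and epoch:
    "\<And>\<beta> n H0. 1 \<le> n \<Longrightarrow> n \<le> 2 ^ \<beta> \<Longrightarrow> H0 \<in> set_pmf (esbas_run env \<gamma> P \<Xi> (2 ^ \<beta> - 1)) \<Longrightarrow>
      bandit_pseudo_regret \<Xi> K (epoch_bandit env \<gamma> P (map snd H0)) n \<le> A * real \<beta> + 2 * B"
    by (rule epoch_bandit_pseudo_regret_le[OF bandit[folded B_def] Theta1(1) K _ gap_lower])
       (use ret_B in auto)
  define C where "C = 2 * (A + 2 * B) / (ln 2)\<^sup>2"
  have bound: "norm (esbas_ss_regret env \<gamma> P \<Xi> K T) \<le> C * \<Delta>inf * norm ((ln (real T))\<^sup>2 / \<Delta>inf)"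
    if "2 \<le> T" for T
  proof -
    have "0 \<le> esbas_ss_regret env \<gamma> P \<Xi> K T \<and>
          esbas_ss_regret env \<gamma> P \<Xi> K T \<le> (\<Sum>\<beta>\<le>floor_log T. A * real \<beta> + 2 * B)"
      using that by (intro esbas_ss_regret_le_sum_epochs[OF supp gap_B epoch]) auto
    moreover have "(\<Sum>\<beta>\<le>floor_log T. A * real \<beta> + 2 * B) \<le> C * (ln (real T))\<^sup>2"
      unfolding C_def using \<open>0 \<le> A\<close> \<open>0 \<le> B\<close> that by (intro sum_epochs_le_ln_squared) auto
    moreover have "C * \<Delta>inf * norm ((ln (real T))\<^sup>2 / \<Delta>inf) = C * (ln (real T))\<^sup>2"
      using lim_pos by simp
    ultimately show ?thesis by simp
  qed
  have "\<forall>\<^sub>F T in at_top. norm (esbas_ss_regret env \<gamma> P \<Xi> K T) \<le>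
      C * \<Delta>inf * norm ((ln (real T))\<^sup>2 / \<Delta>inf)"
    using eventually_ge_at_top[of "2::nat"] by (rule eventually_mono) (rule bound)
  then show ?thesis by (rule bigoI)
qed

end
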